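(* Let $K,T\subset\mathbb{R}^n$ be convex bodies, where $T$ is strictly convex and smooth, and let $q=(q_1,\dots,q_m)$ be a closed $(K,T)$-Minkowski billiard trajectory. Then for every $j\in\{1,\dots,m\}$ there is exactly one $K$-supporting hyperplane $H_j$ through $q_j$ such that $q_j$ minimizes $\bar q\mapsto\mu_{T^\circ}(\bar q-q_{j-1})+\mu_{T^\circ}(q_{j+1}-\bar q)$ over all $\bar q\in H_j$.
   Context: A convex body is a compact convex set in $\mathbb{R}^n$ containing the origin in its interior; it is smooth if through each boundary point there is a unique supporting hyperplane. For a convex body $T$, $T^\circ$ is its polar body and $\mu_{T^\circ}(x)=\min\{t\ge 0: x\in tT^\circ\}$. For a convex set $C$ and $z\in\partial C$, $N_C(z)=\{v:\langle v,y-z\rangle\le 0\ \forall y\in C\}$. A closed polygonal curve $(q_1,\dots,q_m)$, $m\ge2$, always satisfies $q_j\ne q_{j+1}$ and $q_j\notin[q_{j-1},q_{j+1}]$ (indices mod $m$). A closed polygonal curve $q$ with vertices on $\partial K$ is a closed $(K,T)$-Minkowski billiard trajectory if there are $p_1,\dots,p_m\in\partial T$ with $q_{j+1}-q_j\in N_T(p_j)$ and $p_{j+1}-p_j\in -N_K(q_{j+1})$ for all $j$. *)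

theory Defs
  imports "HOL-Analysis.Analysis"
begin

definition convex_body :: "'a::euclidean_space set \<Rightarrow> bool" where
  "convex_body K \<longleftrightarrow> compact K \<and> convex K \<and> 0 \<in> interior K"

definition supporting_hyperplane :: "'a::euclidean_space set \<Rightarrow> 'a \<Rightarrow> 'a set \<Rightarrow> bool" where
  "supporting_hyperplane C z H \<longleftrightarrow>
     (\<exists>v. v \<noteq> 0 \<and> H = {y. v \<bullet> y = v \<bullet> z} \<and> (\<forall>y\<in>C. v \<bullet> y \<le> v \<bullet> z))"

definition smooth_body :: "'a::euclidean_space set \<Rightarrow> bool" where
  "smooth_body C \<longleftrightarrow> (\<forall>z\<in>frontier C. \<exists>!H. supporting_hyperplane C z H)"

definition strictly_convex :: "'a::euclidean_space set \<Rightarrow> bool" where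
  "strictly_convex C \<longleftrightarrow> convex C \<and>
     (\<forall>x\<in>C. \<forall>y\<in>C. x \<noteq> y \<longrightarrow> open_segment x y \<subseteq> interior C)"

definition polar_body :: "'a::euclidean_space set \<Rightarrow> 'a set" where
  "polar_body T = {y. \<forall>x\<in>T. x \<bullet> y \<le> 1}"

definition gauge_fun :: "'a::euclidean_space set \<Rightarrow> 'a \<Rightarrow> real" where
  "gauge_fun C x = Inf {t. t \<ge> 0 \<and> x \<in> (\<lambda>v. t *\<^sub>R v) ` C}"

definition normal_cone :: "'a::euclidean_space set \<Rightarrow> 'a \<Rightarrow> 'a set" where
  "normal_cone C z = {v. \<forall>y\<in>C. v \<bullet> (y - z) \<le> 0}"

text \<open>Closed polygonal curve with m vertices q 0, ..., q (m-1); indices taken mod m.\<close>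
definition closed_polygonal :: "nat \<Rightarrow> (nat \<Rightarrow> 'a::euclidean_space) \<Rightarrow> bool" where
  "closed_polygonal m q \<longleftrightarrow> m \<ge> 2 \<and>
     (\<forall>j<m. q j \<noteq> q ((j + 1) mod m) \<and>
            q j \<notin> closed_segment (q ((j + m - 1) mod m)) (q ((j + 1) mod m)))"

definition minkowski_billiard :: "'a::euclidean_space set \<Rightarrow> 'a set \<Rightarrow> nat \<Rightarrow> (nat \<Rightarrow> 'a) \<Rightarrow> bool" where
  "minkowski_billiard K T m q \<longleftrightarrow> closed_polygonal m q \<and> (\<forall>j<m. q j \<in> frontier K) \<and>
     (\<exists>p. (\<forall>j<m. p j \<in> frontier T) \<and>
          (\<forall>j<m. q ((j + 1) mod m) - q j \<in> normal_cone T (p j) \<and>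
                 p ((j + 1) mod m) - p j \<in> uminus ` normal_cone K (q ((j + 1) mod m))))"

end

theory Submission imports Defs begin

text \<open>The gauge of the polar body is the support function h(u) = max {u \<bullet> p | p \<in> T}. At a
  vertex z with neighbours x and y the billiard law says that h(z - x) and h(y - z) are attained
  at points P and Q of T with P - Q an outer normal of K at z. Hence
  h(w - x) + h(y - w) \<ge> (w - x) \<bullet> P + (y - w) \<bullet> Q, with equality at w = z, and the right-hand side
  is constant on the hyperplane through z with normal P - Q; this hyperplane supports K, as
  P \<noteq> Q by smoothness of T (z is a genuine vertex). Strict convexity of T makes h differentiable
  at z - x and y - z with gradients P and Q, so on any other hyperplane through z the sum has a
  nonzero derivative (P - Q) \<bullet> d in some direction d and z is not a minimiser there.\<close>

lemma in_normal_cone_iff: "x \<in> normal_cone C z \<longleftrightarrow> (\<forall>y\<in>C. x \<bullet> y \<le> x \<bullet> z)"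
  by (auto simp: normal_cone_def inner_diff_right)

lemma interior_exists_inner_gt:
  fixes C :: "'a::euclidean_space set"
  assumes "z \<in> interior C" "x \<noteq> 0"
  obtains y where "y \<in> C" "x \<bullet> z < x \<bullet> y"
proof -
  obtain e where e: "e > 0" "ball z e \<subseteq> C" using assms(1) mem_interior by blast
  define y where "y = z + (e / 2 / norm x) *\<^sub>R x"
  have "dist z y = e / 2" using e assms(2) by (simp add: y_def dist_norm)
  hence "y \<in> C" using e by auto
  moreover have "x \<bullet> y = x \<bullet> z + e / 2 * norm x" using assms(2)
    by (simp add: y_def inner_add_right power2_norm_eq_inner[symmetric] power2_eq_square)
  moreover have "e / 2 * norm x > 0" using e assms(2) by simp
  ultimately show ?thesis using that by simp
qed

lemma compact_exists_normal_cone_point: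
  fixes C :: "'a::euclidean_space set"
  assumes "compact C" "C \<noteq> {}"
  obtains p where "p \<in> C" "x \<in> normal_cone C p"
proof -
  have "continuous_on C (\<lambda>y. x \<bullet> y)" by (intro continuous_intros)
  then obtain p where "p \<in> C" "\<forall>y\<in>C. x \<bullet> y \<le> x \<bullet> p"
    using continuous_attains_sup[OF assms] by blast
  thus ?thesis using that by (simp add: in_normal_cone_iff)
qed

lemma normal_cone_antipodal_eq_0:
  fixes C :: "'a::euclidean_space set"
  assumes "interior C \<noteq> {}" "x \<in> normal_cone C p" "- x \<in> normal_cone C p"
  shows "x = 0"
proof (rule ccontr)
  assume "x \<noteq> 0"
  obtain z where z: "z \<in> interior C" using assms(1) by blast
  then obtain y where "y \<in> C" "x \<bullet> z < x \<bullet> y" using interior_exists_inner_gt \<open>x \<noteq> 0\<close> by blast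
  moreover have "\<forall>y\<in>C. x \<bullet> y = x \<bullet> p" using assms(2,3) by (force simp: in_normal_cone_iff)
  moreover have "z \<in> C" using z interior_subset by blast
  ultimately show False by simp
qed

lemma strictly_convex_normal_cone_unique:
  fixes C :: "'a::euclidean_space set"
  assumes "strictly_convex C" "x \<noteq> 0" "p \<in> C" "p' \<in> C"
    and "x \<in> normal_cone C p" "x \<in> normal_cone C p'"
  shows "p' = p"
proof (rule ccontr)
  assume "p' \<noteq> p"
  hence "midpoint p p' \<in> interior C"
    using assms(1,3,4) midpoint_in_open_segment[of p p'] unfolding strictly_convex_def by blast
  then obtain y where "y \<in> C" "x \<bullet> midpoint p p' < x \<bullet> y"
    using interior_exists_inner_gt assms(2) by blast
  moreover have "x \<bullet> p = x \<bullet> p'" using assms(3-6) by (force simp: in_normal_cone_iff)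
  ultimately show False using assms(5)
    by (auto simp: in_normal_cone_iff midpoint_def inner_add_right)
qed

lemma scaled_polar_body_iff:
  fixes T :: "'a::euclidean_space set"
  assumes "t > 0"
  shows "x \<in> (\<lambda>v. t *\<^sub>R v) ` polar_body T \<longleftrightarrow> (\<forall>y\<in>T. x \<bullet> y \<le> t)"
proof
  assume "x \<in> (\<lambda>v. t *\<^sub>R v) ` polar_body T"
  then obtain v where v: "x = t *\<^sub>R v" "\<forall>y\<in>T. y \<bullet> v \<le> 1" unfolding polar_body_def by auto
  show "\<forall>y\<in>T. x \<bullet> y \<le> t"
  proof
    fix y assume "y \<in> T"
    hence "t * (y \<bullet> v) \<le> t" using v(2) assms by (simp add: mult_left_le)
    thus "x \<bullet> y \<le> t" using v(1) by (simp add: inner_commute)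
  qed
next
  assume le: "\<forall>y\<in>T. x \<bullet> y \<le> t"
  have "inverse t *\<^sub>R x \<in> polar_body T"
    using le assms by (auto simp: polar_body_def inner_commute field_simps)
  moreover have "x = t *\<^sub>R (inverse t *\<^sub>R x)" using assms by simp
  ultimately show "x \<in> (\<lambda>v. t *\<^sub>R v) ` polar_body T" by blast
qed

lemma gauge_polar_body_eq:
  fixes T :: "'a::euclidean_space set"
  assumes "0 \<in> interior T" "p \<in> T" "x \<in> normal_cone T p"
  shows "gauge_fun (polar_body T) x = x \<bullet> p"
proof -
  have max: "\<forall>y\<in>T. x \<bullet> y \<le> x \<bullet> p" using assms(3) by (simp add: in_normal_cone_iff)
  have nonneg: "0 \<le> x \<bullet> p" using max assms(1) interior_subset by fastforce
  have x0: "x = 0" if "x \<bullet> p \<le> 0"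
  proof (rule ccontr)
    assume "x \<noteq> 0"
    then obtain y where "y \<in> T" "x \<bullet> 0 < x \<bullet> y" by (rule interior_exists_inner_gt[OF assms(1)])
    thus False using max that by fastforce
  qed
  have "0 \<in> polar_body T" by (simp add: polar_body_def)
  hence "(\<lambda>v. 0 *\<^sub>R v) ` polar_body T = {0}" by auto
  hence zero: "x \<in> (\<lambda>v. 0 *\<^sub>R v) ` polar_body T \<longleftrightarrow> x \<bullet> p \<le> 0"
    using x0 by auto
  have pos: "x \<in> (\<lambda>v. t *\<^sub>R v) ` polar_body T \<longleftrightarrow> x \<bullet> p \<le> t" if "t > 0" for t
    unfolding scaled_polar_body_iff[OF that] using max assms(2) by (blast intro: order_trans)
  have "t \<ge> 0 \<and> x \<in> (\<lambda>v. t *\<^sub>R v) ` polar_body T \<longleftrightarrow> x \<bullet> p \<le> t" for t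
  proof (cases t "0::real" rule: linorder_cases)
    case less
    thus ?thesis using nonneg by auto
  next
    case equal
    thus ?thesis using zero by auto
  next
    case greater
    thus ?thesis using pos by auto
  qed
  hence "{t. t \<ge> 0 \<and> x \<in> (\<lambda>v. t *\<^sub>R v) ` polar_body T} = {x \<bullet> p..}" by auto
  thus ?thesis by (simp add: gauge_fun_def)
qed

lemma inner_le_gauge_polar_body:
  fixes T :: "'a::euclidean_space set"
  assumes "compact T" "0 \<in> interior T" "p \<in> T"
  shows "x \<bullet> p \<le> gauge_fun (polar_body T) x"
proof -
  obtain p' where "p' \<in> T" "x \<in> normal_cone T p'"
    using compact_exists_normal_cone_point assms(1,3) by blast
  thus ?thesis using gauge_polar_body_eq[OF assms(2)] assms(3) by (auto simp: in_normal_cone_iff)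
qed

lemma gauge_polar_body_add_le:
  fixes T :: "'a::euclidean_space set"
  assumes "0 \<in> interior T" "p \<in> T" "x \<in> normal_cone T p" "p' \<in> T" "x + u \<in> normal_cone T p'"
  shows "gauge_fun (polar_body T) (x + u) \<le> gauge_fun (polar_body T) x + u \<bullet> p'"
proof -
  have "x \<bullet> p' \<le> x \<bullet> p" using assms(3,4) by (simp add: in_normal_cone_iff)
  thus ?thesis using gauge_polar_body_eq[OF assms(1)] assms(2-5) by (simp add: inner_add_left)
qed

lemma gauge_polar_body_sum_shift_le:
  fixes T :: "'a::euclidean_space set"
  assumes "0 \<in> interior T" "P \<in> T" "Q \<in> T" "a \<in> normal_cone T P" "b \<in> normal_cone T Q"
    and "P' \<in> T" "Q' \<in> T" "a + u \<in> normal_cone T P'" "b - u \<in> normal_cone T Q'"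
  shows "gauge_fun (polar_body T) (a + u) + gauge_fun (polar_body T) (b - u)
       \<le> gauge_fun (polar_body T) a + gauge_fun (polar_body T) b + u \<bullet> (P' - Q')"
proof -
  have "gauge_fun (polar_body T) (a + u) \<le> gauge_fun (polar_body T) a + u \<bullet> P'"
    using gauge_polar_body_add_le assms(1,2,4,6,8) .
  moreover have "gauge_fun (polar_body T) (b + - u) \<le> gauge_fun (polar_body T) b + - u \<bullet> Q'"
    using gauge_polar_body_add_le[OF assms(1,3,5,7), of "- u"] assms(9) by simp
  ultimately show ?thesis by (simp add: inner_diff_right)
qed

lemma normal_cone_limit:
  fixes C :: "'a::euclidean_space set"
  assumes "x \<longlonglongrightarrow> x0" "p \<longlonglongrightarrow> p0" "\<And>n. x n \<in> normal_cone C (p n)"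
  shows "x0 \<in> normal_cone C p0"
  unfolding normal_cone_def
proof safe
  fix y assume "y \<in> C"
  hence "\<And>n. x n \<bullet> (y - p n) \<le> 0" using assms(3) by (simp add: normal_cone_def)
  moreover have "(\<lambda>n. x n \<bullet> (y - p n)) \<longlonglongrightarrow> x0 \<bullet> (y - p0)"
    by (intro tendsto_intros assms(1,2))
  ultimately show "x0 \<bullet> (y - p0) \<le> 0" by (meson LIMSEQ_le_const2)
qed

lemma gauge_polar_body_sum_descent:
  fixes T :: "'a::euclidean_space set"
  assumes T: "compact T" "0 \<in> interior T" "strictly_convex T"
    and "a \<noteq> 0" "b \<noteq> 0" "P \<in> T" "Q \<in> T" "a \<in> normal_cone T P" "b \<in> normal_cone T Q"
    and descent: "(P - Q) \<bullet> d < 0"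
  shows "\<exists>t>0. gauge_fun (polar_body T) (a + t *\<^sub>R d) + gauge_fun (polar_body T) (b - t *\<^sub>R d)
              < gauge_fun (polar_body T) a + gauge_fun (polar_body T) b"
proof (rule ccontr)
  define G where "G = gauge_fun (polar_body T)"
  assume "\<not> ?thesis"
  hence no_descent: "G a + G b \<le> G (a + t *\<^sub>R d) + G (b - t *\<^sub>R d)" if "t > 0" for t
    using that unfolding G_def by force
  define t :: "nat \<Rightarrow> real" where "t n = inverse (Suc n)" for n
  have t_pos: "t n > 0" for n unfolding t_def by simp
  have "T \<noteq> {}" using T(2) interior_subset by blast
  then have "\<forall>n. \<exists>z. z \<in> T \<times> T \<and> a + t n *\<^sub>R d \<in> normal_cone T (fst z)
                                 \<and> b - t n *\<^sub>R d \<in> normal_cone T (snd z)"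
    using compact_exists_normal_cone_point[OF T(1)] by (metis SigmaI fst_conv snd_conv)
  then obtain f where f: "\<And>n. f n \<in> T \<times> T" "\<And>n. a + t n *\<^sub>R d \<in> normal_cone T (fst (f n))"
      "\<And>n. b - t n *\<^sub>R d \<in> normal_cone T (snd (f n))"
    by metis
  have f_ge: "0 \<le> (fst (f n) - snd (f n)) \<bullet> d" for n
  proof -
    have "fst (f n) \<in> T" "snd (f n) \<in> T" using f(1)[of n] by (auto simp: mem_Times_iff)
    hence "G (a + t n *\<^sub>R d) + G (b - t n *\<^sub>R d) \<le> G a + G b + (t n *\<^sub>R d) \<bullet> (fst (f n) - snd (f n))"
      using gauge_polar_body_sum_shift_le[OF T(2) assms(6-9) _ _ f(2) f(3)] unfolding G_def by blast
    hence "G a + G b \<le> G a + G b + (t n *\<^sub>R d) \<bullet> (fst (f n) - snd (f n))"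
      using no_descent[OF t_pos[of n]] by linarith
    thus ?thesis using t_pos[of n] by (simp add: zero_le_mult_iff inner_commute)
  qed
  have "seq_compact (T \<times> T)" using compact_imp_seq_compact compact_Times T(1) by blast
  then obtain l r where l: "l \<in> T \<times> T" and r: "strict_mono r" and lim: "(f \<circ> r) \<longlonglongrightarrow> l"
    using f(1) unfolding seq_compact_def by metis
  have t_lim: "(\<lambda>n. t (r n)) \<longlonglongrightarrow> 0"
    using LIMSEQ_subseq_LIMSEQ[OF LIMSEQ_inverse_real_of_nat r] unfolding t_def o_def .
  have fst_lim: "(\<lambda>n. fst (f (r n))) \<longlonglongrightarrow> fst l" and snd_lim: "(\<lambda>n. snd (f (r n))) \<longlonglongrightarrow> snd l"
    using tendsto_fst[OF lim] tendsto_snd[OF lim] unfolding o_def by auto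
  have a_lim: "(\<lambda>n. a + t (r n) *\<^sub>R d) \<longlonglongrightarrow> a"
    using tendsto_add[OF tendsto_const tendsto_scaleR[OF t_lim tendsto_const]] by simp
  have b_lim: "(\<lambda>n. b - t (r n) *\<^sub>R d) \<longlonglongrightarrow> b"
    using tendsto_diff[OF tendsto_const tendsto_scaleR[OF t_lim tendsto_const]] by simp
  have "fst l = P"
    using strictly_convex_normal_cone_unique[OF T(3) \<open>a \<noteq> 0\<close>] normal_cone_limit[OF a_lim fst_lim] f(2)
      l assms(6,8) by (auto simp: mem_Times_iff)
  moreover have "snd l = Q"
    using strictly_convex_normal_cone_unique[OF T(3) \<open>b \<noteq> 0\<close>] normal_cone_limit[OF b_lim snd_lim] f(3)
      l assms(7,9) by (auto simp: mem_Times_iff)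
  moreover have "0 \<le> (fst l - snd l) \<bullet> d"
    using f_ge by (intro LIMSEQ_le_const[OF tendsto_inner[OF tendsto_diff[OF fst_lim snd_lim] tendsto_const]]) auto
  ultimately show False using descent by simp
qed

lemma parallel_or_descent_direction:
  fixes g v :: "'a::euclidean_space"
  assumes "v \<noteq> 0" "g \<noteq> 0"
  shows "(\<exists>c. c \<noteq> 0 \<and> g = c *\<^sub>R v) \<or> (\<exists>d. v \<bullet> d = 0 \<and> g \<bullet> d < 0)"
proof -
  define c where "c = (g \<bullet> v) / (v \<bullet> v)"
  define d where "d = g - c *\<^sub>R v"
  have vd: "v \<bullet> d = 0" using assms(1) by (simp add: d_def c_def inner_diff_right inner_commute)
  have gd: "g \<bullet> d = d \<bullet> d"
    using vd by (simp add: d_def inner_diff_left inner_diff_right inner_commute)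
  show ?thesis
  proof (cases "d = 0")
    case True
    thus ?thesis using assms(2) by (auto simp: d_def)
  next
    case False
    thus ?thesis using vd gd by (intro disjI2 exI[of _ "- d"]) simp
  qed
qed

lemma hyperplane_eq_imp_parallel:
  fixes a b z :: "'a::euclidean_space"
  assumes "a \<noteq> 0" "b \<noteq> 0" "{y. a \<bullet> y = a \<bullet> z} = {y. b \<bullet> y = b \<bullet> z}"
  obtains c where "c \<noteq> 0" "b = c *\<^sub>R a"
proof -
  have no_descent: "\<not> (a \<bullet> d = 0 \<and> b \<bullet> d < 0)" for d
  proof
    assume d: "a \<bullet> d = 0 \<and> b \<bullet> d < 0"
    hence "z + d \<in> {y. a \<bullet> y = a \<bullet> z}" by (simp add: inner_add_right)
    thus False using assms(3) d by (auto simp: inner_add_right)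
  qed
  obtain c where "c \<noteq> 0" "b = c *\<^sub>R a"
    using parallel_or_descent_direction[OF assms(1,2)] no_descent by blast
  thus ?thesis by (rule that)
qed

lemma smooth_body_normal_cone_parallel:
  fixes C :: "'a::euclidean_space set"
  assumes "smooth_body C" "interior C \<noteq> {}" "p \<in> frontier C"
    and "a \<noteq> 0" "b \<noteq> 0" "a \<in> normal_cone C p" "b \<in> normal_cone C p"
  obtains c where "c > 0" "b = c *\<^sub>R a"
proof -
  have "supporting_hyperplane C p {y. a \<bullet> y = a \<bullet> p}" "supporting_hyperplane C p {y. b \<bullet> y = b \<bullet> p}"
    using assms(4-7) unfolding supporting_hyperplane_def in_normal_cone_iff by blast+
  hence "{y. a \<bullet> y = a \<bullet> p} = {y. b \<bullet> y = b \<bullet> p}"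
    using assms(1,3) unfolding smooth_body_def by blast
  then obtain c where c: "c \<noteq> 0" "b = c *\<^sub>R a"
    using hyperplane_eq_imp_parallel assms(4,5) by blast
  have "\<not> c < 0"
  proof
    assume "c < 0"
    hence "- a \<in> normal_cone C p"
      using assms(7) c(2) by (auto simp: in_normal_cone_iff mult_le_cancel_left)
    thus False using normal_cone_antipodal_eq_0 assms(2,4,6) by blast
  qed
  hence "c > 0" using c(1) by linarith
  thus ?thesis using c(2) by (rule that)
qed

lemma in_closed_segment_if_steps_parallel:
  fixes x y z :: "'a::real_vector"
  assumes "y - z = c *\<^sub>R (z - x)" "0 \<le> c"
  shows "z \<in> closed_segment x y"
proof -
  define u where "u = 1 / (1 + c)"
  have y: "y = (1 + c) *\<^sub>R z - c *\<^sub>R x" using assms(1) by (simp add: algebra_simps)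
  have "(1 - u) *\<^sub>R x + u *\<^sub>R y = (1 - u - u * c) *\<^sub>R x + (u * (1 + c)) *\<^sub>R z"
    unfolding y by (simp add: algebra_simps)
  also have "1 - u - u * c = 0" using assms(2) by (simp add: u_def field_simps)
  also have "u * (1 + c) = 1" using assms(2) by (simp add: u_def field_simps)
  finally have "z = (1 - u) *\<^sub>R x + u *\<^sub>R y" by simp
  moreover have "0 \<le> u" "u \<le> 1" using assms(2) by (auto simp: u_def)
  ultimately show ?thesis unfolding closed_segment_def by blast
qed

lemma smooth_body_supporting_points_neq:
  fixes T :: "'a::euclidean_space set"
  assumes "smooth_body T" "interior T \<noteq> {}" "P \<in> frontier T"
    and "z - x \<in> normal_cone T P" "y - z \<in> normal_cone T Q"
    and "x \<noteq> z" "z \<noteq> y" "z \<notin> closed_segment x y"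
  shows "P \<noteq> Q"
proof
  assume "P = Q"
  have "z - x \<noteq> 0" "y - z \<noteq> 0" using assms(6,7) by auto
  then obtain c where "c > 0" "y - z = c *\<^sub>R (z - x)"
    using smooth_body_normal_cone_parallel[OF assms(1-3)] assms(4,5) \<open>P = Q\<close> by metis
  thus False using in_closed_segment_if_steps_parallel assms(8) by fastforce
qed

lemma gauge_polar_body_sum_le_on_hyperplane:
  fixes T :: "'a::euclidean_space set"
  assumes T: "compact T" "0 \<in> interior T"
    and "P \<in> T" "Q \<in> T" "z - x \<in> normal_cone T P" "y - z \<in> normal_cone T Q"
    and w: "(P - Q) \<bullet> w = (P - Q) \<bullet> z"
  shows "gauge_fun (polar_body T) (z - x) + gauge_fun (polar_body T) (y - z)
       \<le> gauge_fun (polar_body T) (w - x) + gauge_fun (polar_body T) (y - w)"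
proof -
  have "gauge_fun (polar_body T) (z - x) + gauge_fun (polar_body T) (y - z) = (z - x) \<bullet> P + (y - z) \<bullet> Q"
    using gauge_polar_body_eq[OF T(2)] assms(3-6) by simp
  also have "\<dots> = (w - x) \<bullet> P + (y - w) \<bullet> Q"
    using w by (simp add: inner_diff_left inner_diff_right inner_commute)
  also have "\<dots> \<le> gauge_fun (polar_body T) (w - x) + gauge_fun (polar_body T) (y - w)"
    using inner_le_gauge_polar_body[OF T] assms(3,4) by (simp add: add_mono)
  finally show ?thesis .
qed

lemma billiard_vertex_unique_minimizing_hyperplane:
  fixes K T :: "'a::euclidean_space set"
  assumes T: "convex_body T" "strictly_convex T" "smooth_body T"
    and P: "P \<in> frontier T" and Q: "Q \<in> frontier T"
    and normals: "z - x \<in> normal_cone T P" "y - z \<in> normal_cone T Q" "P - Q \<in> normal_cone K z"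
    and polygon: "x \<noteq> z" "z \<noteq> y" "z \<notin> closed_segment x y"
  shows "\<exists>!H. supporting_hyperplane K z H \<and>
           (\<forall>w\<in>H. gauge_fun (polar_body T) (z - x) + gauge_fun (polar_body T) (y - z)
                 \<le> gauge_fun (polar_body T) (w - x) + gauge_fun (polar_body T) (y - w))"
proof -
  define G where "G = gauge_fun (polar_body T)"
  have cT: "compact T" "0 \<in> interior T" using T(1) unfolding convex_body_def by auto
  have PT: "P \<in> T" and QT: "Q \<in> T"
    using P Q frontier_subset_closed compact_imp_closed[OF cT(1)] by blast+
  have a0: "z - x \<noteq> 0" and b0: "y - z \<noteq> 0" using polygon(1,2) by auto
  have "P \<noteq> Q"
    using smooth_body_supporting_points_neq[OF T(3) _ P normals(1,2) polygon] cT(2) by blast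
  define H0 where "H0 = {w. (P - Q) \<bullet> w = (P - Q) \<bullet> z}"
  show ?thesis unfolding G_def[symmetric]
  proof (rule ex1I[of _ H0], intro conjI)
    show "supporting_hyperplane K z H0"
      using \<open>P \<noteq> Q\<close> normals(3) unfolding supporting_hyperplane_def H0_def in_normal_cone_iff
      by (intro exI[of _ "P - Q"]) auto
    show "\<forall>w\<in>H0. G (z - x) + G (y - z) \<le> G (w - x) + G (y - w)"
      using gauge_polar_body_sum_le_on_hyperplane[OF cT PT QT normals(1,2)] unfolding G_def H0_def by blast
  next
    fix H assume H: "supporting_hyperplane K z H \<and> (\<forall>w\<in>H. G (z - x) + G (y - z) \<le> G (w - x) + G (y - w))"
    then obtain v where v: "v \<noteq> 0" "H = {w. v \<bullet> w = v \<bullet> z}"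
      unfolding supporting_hyperplane_def by blast
    have "P - Q \<noteq> 0" using \<open>P \<noteq> Q\<close> by simp
    from parallel_or_descent_direction[OF v(1) this] show "H = H0"
    proof (elim disjE exE conjE)
      fix c assume "c \<noteq> 0" "P - Q = c *\<^sub>R v"
      thus "H = H0" unfolding v(2) H0_def by auto
    next
      fix d assume d: "v \<bullet> d = 0" "(P - Q) \<bullet> d < 0"
      obtain t where "t > 0" and less: "G (z - x + t *\<^sub>R d) + G (y - z - t *\<^sub>R d) < G (z - x) + G (y - z)"
        using gauge_polar_body_sum_descent[OF cT T(2) a0 b0 PT QT normals(1,2) d(2)]
        unfolding G_def by blast
      have "z + t *\<^sub>R d \<in> H" unfolding v(2) using d(1) by (simp add: inner_add_right)
      hence "G (z - x) + G (y - z) \<le> G (z + t *\<^sub>R d - x) + G (y - (z + t *\<^sub>R d))" using H by blast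
      with less show "H = H0" by (simp add: algebra_simps)
    qed
  qed
qed

lemma succ_mod_pred_mod:
  fixes j m :: nat
  assumes "j < m"
  shows "((j + m - 1) mod m + 1) mod m = j"
proof -
  have "((j + m - 1) mod m + 1) mod m = (j + m - 1 + 1) mod m" by (rule mod_add_left_eq)
  also have "j + m - 1 + 1 = j + m" using assms by simp
  finally show ?thesis using assms by simp
qed

theorem proposition3p3:
  fixes K T :: "'a::euclidean_space set" and q :: "nat \<Rightarrow> 'a" and m :: nat
  assumes "convex_body K" and "convex_body T"
    and "strictly_convex T" and "smooth_body T"
    and "minkowski_billiard K T m q"
  shows "\<forall>j<m. \<exists>!H. supporting_hyperplane K (q j) H \<and>
           (\<forall>qb\<in>H. gauge_fun (polar_body T) (q j - q ((j + m - 1) mod m))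
                      + gauge_fun (polar_body T) (q ((j + 1) mod m) - q j)
                    \<le> gauge_fun (polar_body T) (qb - q ((j + m - 1) mod m))
                      + gauge_fun (polar_body T) (q ((j + 1) mod m) - qb))"
proof (intro allI impI)
  fix j assume j: "j < m"
  obtain p where polygon: "closed_polygonal m q" and p: "\<forall>j<m. p j \<in> frontier T"
    and normal_T: "\<forall>j<m. q ((j + 1) mod m) - q j \<in> normal_cone T (p j)"
    and normal_K: "\<forall>j<m. p ((j + 1) mod m) - p j \<in> uminus ` normal_cone K (q ((j + 1) mod m))"
    using assms(5) unfolding minkowski_billiard_def by blast
  define i where "i = (j + m - 1) mod m"
  have i: "i < m" "(i + 1) mod m = j" using j succ_mod_pred_mod[OF j] by (simp_all add: i_def)
  have "p j - p i \<in> uminus ` normal_cone K (q j)" using normal_K i by metis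
  hence reflection: "p i - p j \<in> normal_cone K (q j)" by (metis image_iff minus_diff_eq minus_minus)
  have "p i \<in> frontier T" "p j \<in> frontier T" using p i j by auto
  moreover have "q j - q i \<in> normal_cone T (p i)" "q ((j + 1) mod m) - q j \<in> normal_cone T (p j)"
    using normal_T i j by metis+
  moreover note reflection
  moreover have "q i \<noteq> q j" "q j \<noteq> q ((j + 1) mod m)" "q j \<notin> closed_segment (q i) (q ((j + 1) mod m))"
    using polygon i j unfolding closed_polygonal_def i_def by metis+
  ultimately show "\<exists>!H. supporting_hyperplane K (q j) H \<and>
           (\<forall>qb\<in>H. gauge_fun (polar_body T) (q j - q ((j + m - 1) mod m))
                      + gauge_fun (polar_body T) (q ((j + 1) mod m) - q j)
                    \<le> gauge_fun (polar_body T) (qb - q ((j + m - 1) mod m))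
                      + gauge_fun (polar_body T) (q ((j + 1) mod m) - qb))"
    unfolding i_def[symmetric] by (rule billiard_vertex_unique_minimizing_hyperplane[OF assms(2-4)])
qed

end
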